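(* Let $k$ be a field of characteristic $0$ and let $\mathcal L$ be a centreless Lie torus of type $(\Delta,\Lambda)$ over $k$. Then $\mathcal L$ is prime, i.e. $[\mathcal I,\mathcal J]\neq0$ for any two nonzero ideals $\mathcal I,\mathcal J$ of $\mathcal L$.
   Context: An irreducible finite root system in a finite-dimensional $k$-vector space $\mathcal X$ is a finite subset $\Delta\subset\mathcal X$ with $0\in\Delta$ such that $\Delta^\times:=\Delta\setminus\{0\}$ is an irreducible (possibly non-reduced) finite root system in the usual sense. Write $Q=\mathrm{span}_{\mathbb Z}(\Delta)$, $\alpha^\vee$ for the coroot of $\alpha\in\Delta^\times$, $\langle\beta,\alpha^\vee\rangle$ for the natural pairing, and $\Delta^\times_{\mathrm{ind}}=\Delta^\times\setminus 2\Delta^\times$. Let $\Lambda$ be a finitely generated free abelian group. A Lie torus of type $(\Delta,\Lambda)$ is a Lie algebra $\mathcal L$ over $k$ with a $Q\times\Lambda$-grading $\mathcal L=\bigoplus_{(\alpha,\lambda)\in Q\times\Lambda}\mathcal L_\alpha^\lambda$ (with $\mathcal L_\alpha:=\bigoplus_\lambda\mathcal L_\alpha^\lambda$, $\mathcal L^\lambda:=\bigoplus_\alpha\mathcal L_\alpha^\lambda$) such that: (LT1) $\{\alpha\in Q:\mathcal L_\alpha\neq0\}=\Delta$; (LT2)(i) $\mathcal L_\alpha^0\neq0$ for all $\alpha\in\Delta^\times_{\mathrm{ind}}$; (ii) whenever $\alpha\in\Delta^\times$ and $\mathcal L_\alpha^\lambda\neq0$ there exist $e\in\mathcal L_\alpha^\lambda$,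 $f\in\mathcal L_{-\alpha}^{-\lambda}$ with $\mathcal L_\alpha^\lambda=ke$, $\mathcal L_{-\alpha}^{-\lambda}=kf$ and $[[e,f],x]=\langle\beta,\alpha^\vee\rangle x$ for all $x\in\mathcal L_\beta$, $\beta\in Q$; (LT3) $\mathcal L$ is generated as an algebra by the $\mathcal L_\alpha$, $\alpha\in\Delta^\times$; (LT4) $\Lambda$ is generated by $\{\lambda:\mathcal L^\lambda\neq0\}$. Centreless means the centre of $\mathcal L$ is zero. *)

theory Defs
  imports Complex_Main
begin

definition lie_algebra :: "('k::field \<Rightarrow> 'L::ab_group_add \<Rightarrow> 'L) \<Rightarrow> ('L \<Rightarrow> 'L \<Rightarrow> 'L) \<Rightarrow> bool" where
  "lie_algebra scale br \<longleftrightarrow>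
     Vector_Spaces.vector_space scale \<and>
     (\<forall>x y z. br (x + y) z = br x z + br y z) \<and>
     (\<forall>x y z. br x (y + z) = br x y + br x z) \<and>
     (\<forall>c x y. br (scale c x) y = scale c (br x y)) \<and>
     (\<forall>c x y. br x (scale c y) = scale c (br x y)) \<and>
     (\<forall>x. br x x = 0) \<and>
     (\<forall>x y z. br x (br y z) + br y (br z x) + br z (br x y) = 0)"

definition lie_subalgebra :: "('k::field \<Rightarrow> 'L::ab_group_add \<Rightarrow> 'L) \<Rightarrow> ('L \<Rightarrow> 'L \<Rightarrow> 'L) \<Rightarrow> 'L set \<Rightarrow> bool" where
  "lie_subalgebra scale br A \<longleftrightarrow> module.subspace scale A \<and> (\<forall>x\<in>A. \<forall>y\<in>A. br x y \<in> A)"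

definition lie_ideal :: "('k::field \<Rightarrow> 'L::ab_group_add \<Rightarrow> 'L) \<Rightarrow> ('L \<Rightarrow> 'L \<Rightarrow> 'L) \<Rightarrow> 'L set \<Rightarrow> bool" where
  "lie_ideal scale br I \<longleftrightarrow> module.subspace scale I \<and> (\<forall>x. \<forall>y\<in>I. br x y \<in> I)"

definition lie_generated :: "('k::field \<Rightarrow> 'L::ab_group_add \<Rightarrow> 'L) \<Rightarrow> ('L \<Rightarrow> 'L \<Rightarrow> 'L) \<Rightarrow> 'L set \<Rightarrow> 'L set" where
  "lie_generated scale br S = \<Inter>{A. lie_subalgebra scale br A \<and> S \<subseteq> A}"

definition lie_bracket_set :: "('k::field \<Rightarrow> 'L::ab_group_add \<Rightarrow> 'L) \<Rightarrow> ('L \<Rightarrow> 'L \<Rightarrow> 'L) \<Rightarrow> 'L set \<Rightarrow> 'L set \<Rightarrow> 'L set" where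
  "lie_bracket_set scale br I J = module.span scale {br x y | x y. x \<in> I \<and> y \<in> J}"

definition centreless :: "('L::ab_group_add \<Rightarrow> 'L \<Rightarrow> 'L) \<Rightarrow> bool" where
  "centreless br \<longleftrightarrow> {z. \<forall>x. br z x = 0} = {0}"

definition lie_prime :: "('k::field \<Rightarrow> 'L::ab_group_add \<Rightarrow> 'L) \<Rightarrow> ('L \<Rightarrow> 'L \<Rightarrow> 'L) \<Rightarrow> bool" where
  "lie_prime scale br \<longleftrightarrow>
     (\<forall>I J. lie_ideal scale br I \<longrightarrow> lie_ideal scale br J \<longrightarrow> I \<noteq> {0} \<longrightarrow> J \<noteq> {0} \<longrightarrow>
        lie_bracket_set scale br I J \<noteq> {0})"

text \<open>\<open>cr \<alpha> \<beta>\<close> stands for the pairing \<open>\<langle>\<beta>, \<alpha>\<^sup>\<or>\<rangle>\<close> (the coroot of \<alpha> evaluated at \<beta>).\<close>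
definition irreducible_root_system ::
  "('k::field_char_0 \<Rightarrow> 'x::ab_group_add \<Rightarrow> 'x) \<Rightarrow> 'x set \<Rightarrow> ('x \<Rightarrow> 'x \<Rightarrow> 'k) \<Rightarrow> bool" where
  "irreducible_root_system sc \<Delta> cr \<longleftrightarrow>
     Vector_Spaces.vector_space sc \<and>
     finite \<Delta> \<and> 0 \<in> \<Delta> \<and> \<Delta> - {0} \<noteq> {} \<and>
     module.span sc (\<Delta> - {0}) = UNIV \<and>
     (\<forall>\<alpha>\<in>\<Delta> - {0}.
        Vector_Spaces.linear sc (*) (cr \<alpha>) \<and> cr \<alpha> \<alpha> = 2 \<and>
        (\<forall>\<beta>\<in>\<Delta> - {0}. cr \<alpha> \<beta> \<in> \<int> \<and> \<beta> - sc (cr \<alpha> \<beta>) \<alpha> \<in> \<Delta> - {0})) \<and>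
     \<not> (\<exists>\<Phi>1 \<Phi>2. \<Phi>1 \<noteq> {} \<and> \<Phi>2 \<noteq> {} \<and> \<Phi>1 \<union> \<Phi>2 = \<Delta> - {0} \<and> \<Phi>1 \<inter> \<Phi>2 = {} \<and>
          (\<forall>\<alpha>\<in>\<Phi>1. \<forall>\<beta>\<in>\<Phi>2. cr \<alpha> \<beta> = 0 \<and> cr \<beta> \<alpha> = 0))"

definition root_lattice :: "('k::field \<Rightarrow> 'x::ab_group_add \<Rightarrow> 'x) \<Rightarrow> 'x set \<Rightarrow> 'x set" where
  "root_lattice sc \<Delta> = {x. \<exists>c :: 'x \<Rightarrow> int. x = (\<Sum>\<alpha>\<in>\<Delta>. sc (of_int (c \<alpha>)) \<alpha>)}"

definition indivisible_roots :: "('k::field \<Rightarrow> 'x::ab_group_add \<Rightarrow> 'x) \<Rightarrow> 'x set \<Rightarrow> 'x set" where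
  "indivisible_roots sc \<Delta> = (\<Delta> - {0}) - (\<lambda>\<beta>. sc 2 \<beta>) ` (\<Delta> - {0})"

definition free_fg_abelian :: "'g::ab_group_add itself \<Rightarrow> bool" where
  "free_fg_abelian _ \<longleftrightarrow>
     (\<exists>(n::nat) (\<phi>::'g \<Rightarrow> nat \<Rightarrow> int).
        bij_betw \<phi> UNIV {v. \<forall>i\<ge>n. v i = 0} \<and> (\<forall>a b. \<phi> (a + b) = (\<lambda>i. \<phi> a i + \<phi> b i)))"

definition add_subgroup :: "'g::ab_group_add set \<Rightarrow> bool" where
  "add_subgroup H \<longleftrightarrow> 0 \<in> H \<and> (\<forall>a\<in>H. \<forall>b\<in>H. a + b \<in> H) \<and> (\<forall>a\<in>H. - a \<in> H)"

definition group_generated :: "'g::ab_group_add set \<Rightarrow> 'g set" where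
  "group_generated S = \<Inter>{H. add_subgroup H \<and> S \<subseteq> H}"

text \<open>\<open>Lc (\<alpha>,l)\<close> is the homogeneous component L_alpha^l.\<close>
definition graded_lie_algebra ::
  "('k::field \<Rightarrow> 'L::ab_group_add \<Rightarrow> 'L) \<Rightarrow> ('L \<Rightarrow> 'L \<Rightarrow> 'L) \<Rightarrow> 'x::ab_group_add set \<Rightarrow>
   ('x \<times> 'g::ab_group_add \<Rightarrow> 'L set) \<Rightarrow> bool" where
  "graded_lie_algebra scale br Q Lc \<longleftrightarrow>
     lie_algebra scale br \<and>
     (\<forall>i. module.subspace scale (Lc i)) \<and>
     (\<forall>\<alpha> l. \<alpha> \<notin> Q \<longrightarrow> Lc (\<alpha>, l) = {0}) \<and>
     (\<forall>x. \<exists>S f. finite S \<and> (\<forall>i\<in>S. f i \<in> Lc i) \<and> x = sum f S) \<and>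
     (\<forall>S f. finite S \<longrightarrow> (\<forall>i\<in>S. f i \<in> Lc i) \<longrightarrow> sum f S = 0 \<longrightarrow> (\<forall>i\<in>S. f i = 0)) \<and>
     (\<forall>\<alpha> l \<beta> m x y. x \<in> Lc (\<alpha>, l) \<longrightarrow> y \<in> Lc (\<beta>, m) \<longrightarrow> br x y \<in> Lc (\<alpha> + \<beta>, l + m))"

definition Lroot :: "('x \<times> 'g \<Rightarrow> 'L::ab_group_add set) \<Rightarrow> 'x \<Rightarrow> 'L set" where
  "Lroot Lc \<alpha> = {x. \<exists>S f. finite S \<and> (\<forall>l\<in>S. f l \<in> Lc (\<alpha>, l)) \<and> x = sum f S}"

definition Ldeg :: "('x \<times> 'g \<Rightarrow> 'L::ab_group_add set) \<Rightarrow> 'g \<Rightarrow> 'L set" where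
  "Ldeg Lc l = {x. \<exists>S f. finite S \<and> (\<forall>\<alpha>\<in>S. f \<alpha> \<in> Lc (\<alpha>, l)) \<and> x = sum f S}"

definition lie_torus ::
  "('k::field_char_0 \<Rightarrow> 'x::ab_group_add \<Rightarrow> 'x) \<Rightarrow> 'x set \<Rightarrow> ('x \<Rightarrow> 'x \<Rightarrow> 'k) \<Rightarrow>
   ('k \<Rightarrow> 'L::ab_group_add \<Rightarrow> 'L) \<Rightarrow> ('L \<Rightarrow> 'L \<Rightarrow> 'L) \<Rightarrow> ('x \<times> 'g::ab_group_add \<Rightarrow> 'L set) \<Rightarrow> bool" where
  "lie_torus sc \<Delta> cr scale br Lc \<longleftrightarrow>
     irreducible_root_system sc \<Delta> cr \<and>
     graded_lie_algebra scale br (root_lattice sc \<Delta>) Lc \<and>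
     \<comment> \<open>LT1\<close>
     {\<alpha> \<in> root_lattice sc \<Delta>. Lroot Lc \<alpha> \<noteq> {0}} = \<Delta> \<and>
     \<comment> \<open>LT2 (i)\<close>
     (\<forall>\<alpha>\<in>indivisible_roots sc \<Delta>. Lc (\<alpha>, 0) \<noteq> {0}) \<and>
     \<comment> \<open>LT2 (ii)\<close>
     (\<forall>\<alpha>\<in>\<Delta> - {0}. \<forall>l. Lc (\<alpha>, l) \<noteq> {0} \<longrightarrow>
        (\<exists>e f. e \<in> Lc (\<alpha>, l) \<and> f \<in> Lc (- \<alpha>, - l) \<and>
               Lc (\<alpha>, l) = range (\<lambda>c. scale c e) \<and>
               Lc (- \<alpha>, - l) = range (\<lambda>c. scale c f) \<and>
               (\<forall>\<beta>\<in>root_lattice sc \<Delta>. \<forall>x\<in>Lroot Lc \<beta>. br (br e f) x = scale (cr \<alpha> \<beta>) x))) \<and>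
     \<comment> \<open>LT3\<close>
     lie_generated scale br (\<Union>\<alpha>\<in>\<Delta> - {0}. Lroot Lc \<alpha>) = UNIV \<and>
     \<comment> \<open>LT4\<close>
     group_generated {l. Ldeg Lc l \<noteq> {0}} = UNIV"

end

theory Submission
  imports Defs "HOL-Library.Product_Plus" "HOL-Library.Function_Algebras"
begin

text \<open>An ideal of the Lie torus containing a nonzero element of some \<open>\<L>\<^sub>\<beta>\<^sup>\<lambda>\<close> is everything:
  the \<open>sl\<^sub>2\<close>-elements \<open>[e, f]\<close> of (LT2) move it into all root spaces \<open>\<L>\<^sub>\<gamma>\<close> with
  \<open>\<langle>\<gamma>, \<alpha>\<^sup>\<or>\<rangle> \<noteq> 0\<close>, irreducibility of \<open>\<Delta>\<close> propagates this to all nonzero roots, and these generate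
  \<open>\<L>\<close> (LT3); for the root \<open>0\<close> one uses that \<open>\<L>\<close> is centreless.

  Now let \<open>I\<close>, \<open>J\<close> be nonzero ideals with \<open>[I, J] = 0\<close>. Since the coroots separate the finitely
  many roots, the operators \<open>ad [e, f]\<close> cut a nonzero \<open>y \<in> J\<close> down to a single root \<open>\<gamma>\<close>.
  As \<open>\<Lambda> \<cong> \<int>\<^sup>n\<close> carries a translation invariant total order (lexicographic), \<open>y\<close> has a top
  degree component \<open>v\<close>. The top degree components of the elements of \<open>I\<close> span an ideal which
  contains a nonzero homogeneous element, hence is \<open>\<L>\<close>; but each of them brackets to \<open>0\<close> with
  \<open>v\<close>, being the top degree component of a bracket \<open>[x, y] = 0\<close>. So \<open>v\<close> is central, a
  contradiction.\<close>

section \<open>Root systems\<close>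

locale root_system =
  fixes sc :: "'k::field_char_0 \<Rightarrow> 'x::ab_group_add \<Rightarrow> 'x"
    and \<Delta> :: "'x set" and cr :: "'x \<Rightarrow> 'x \<Rightarrow> 'k"
  assumes irreducible_root_system: "irreducible_root_system sc \<Delta> cr"
begin

interpretation X: Vector_Spaces.vector_space sc
  using irreducible_root_system unfolding irreducible_root_system_def by blast

lemma finite_roots: "finite \<Delta>"
  and coroot_linear: "\<alpha> \<in> \<Delta> - {0} \<Longrightarrow> Vector_Spaces.linear sc (*) (cr \<alpha>)"
  and coroot_self: "\<alpha> \<in> \<Delta> - {0} \<Longrightarrow> cr \<alpha> \<alpha> = 2"
  and reflection_root: "\<alpha> \<in> \<Delta> - {0} \<Longrightarrow> \<beta> \<in> \<Delta> - {0} \<Longrightarrow> \<beta> - sc (cr \<alpha> \<beta>) \<alpha> \<in> \<Delta> - {0}"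
  and roots_not_decomposable: "\<not> (\<exists>\<Phi>1 \<Phi>2. \<Phi>1 \<noteq> {} \<and> \<Phi>2 \<noteq> {} \<and> \<Phi>1 \<union> \<Phi>2 = \<Delta> - {0} \<and>
        \<Phi>1 \<inter> \<Phi>2 = {} \<and> (\<forall>\<alpha>\<in>\<Phi>1. \<forall>\<beta>\<in>\<Phi>2. cr \<alpha> \<beta> = 0 \<and> cr \<beta> \<alpha> = 0))"
  using irreducible_root_system unfolding irreducible_root_system_def by auto

lemma coroot_add: "\<alpha> \<in> \<Delta> - {0} \<Longrightarrow> cr \<alpha> (x + y) = cr \<alpha> x + cr \<alpha> y"
  and coroot_diff: "\<alpha> \<in> \<Delta> - {0} \<Longrightarrow> cr \<alpha> (x - y) = cr \<alpha> x - cr \<alpha> y"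
  and coroot_minus: "\<alpha> \<in> \<Delta> - {0} \<Longrightarrow> cr \<alpha> (- x) = - cr \<alpha> x"
  and coroot_scale: "\<alpha> \<in> \<Delta> - {0} \<Longrightarrow> cr \<alpha> (sc c x) = c * cr \<alpha> x"
  and coroot_zero: "\<alpha> \<in> \<Delta> - {0} \<Longrightarrow> cr \<alpha> 0 = 0"
proof -
  assume "\<alpha> \<in> \<Delta> - {0}"
  then interpret Vector_Spaces.linear sc "(*)" "cr \<alpha>" by (rule coroot_linear)
  show "cr \<alpha> (x + y) = cr \<alpha> x + cr \<alpha> y" "cr \<alpha> (x - y) = cr \<alpha> x - cr \<alpha> y"
    "cr \<alpha> (- x) = - cr \<alpha> x" "cr \<alpha> (sc c x) = c * cr \<alpha> x" "cr \<alpha> 0 = 0"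
    by (simp_all add: add diff neg scale)
qed

lemma no_infinite_root_progression:
  assumes "\<delta> \<noteq> 0" "c \<noteq> 0"
  shows "\<not> (\<forall>n::nat. v + sc (of_nat n * c) \<delta> \<in> \<Delta>)"
proof
  assume progression: "\<forall>n::nat. v + sc (of_nat n * c) \<delta> \<in> \<Delta>"
  have "inj (\<lambda>n::nat. v + sc (of_nat n * c) \<delta>)"
    using assms by (intro injI) simp
  moreover have "range (\<lambda>n::nat. v + sc (of_nat n * c) \<delta>) \<subseteq> \<Delta>"
    using progression by auto
  ultimately show False
    using finite_imageD finite_subset finite_roots infinite_UNIV_nat by metis
qed

text \<open>If \<open>c = \<langle>\<alpha>, \<gamma>\<^sup>\<or>\<rangle> \<noteq> 0\<close> while \<open>\<langle>\<gamma>, \<alpha>\<^sup>\<or>\<rangle> = 0\<close>, the four reflections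
  \<open>s\<^sub>\<gamma> s\<^sub>\<alpha> s\<^sub>\<gamma> s\<^sub>\<alpha>\<close> map \<open>\<alpha> - m c \<gamma>\<close> to \<open>\<alpha> - (m + 2) c \<gamma>\<close>, so \<open>\<Delta>\<close> would be infinite.\<close>
lemma coroot_eq_0_sym:
  assumes \<alpha>: "\<alpha> \<in> \<Delta> - {0}" and \<gamma>: "\<gamma> \<in> \<Delta> - {0}" and "cr \<alpha> \<gamma> = 0"
  shows "cr \<gamma> \<alpha> = 0"
proof (rule ccontr)
  define c where "c = cr \<gamma> \<alpha>"
  assume "cr \<gamma> \<alpha> \<noteq> 0"
  hence "c \<noteq> 0" unfolding c_def .
  note coroot_simps = coroot_add[OF \<alpha>] coroot_add[OF \<gamma>] coroot_diff[OF \<alpha>] coroot_diff[OF \<gamma>]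
    coroot_scale[OF \<alpha>] coroot_scale[OF \<gamma>] coroot_minus[OF \<alpha>] coroot_minus[OF \<gamma>]
    coroot_self[OF \<alpha>] coroot_self[OF \<gamma>] \<open>cr \<alpha> \<gamma> = 0\<close> c_def[symmetric]
  have step: "\<alpha> - sc ((m + 2) * c) \<gamma> \<in> \<Delta> - {0}" if "\<alpha> - sc (m * c) \<gamma> \<in> \<Delta> - {0}" for m
  proof -
    let ?v1 = "\<alpha> - sc (m * c) \<gamma> - sc 2 \<alpha>"
    let ?v2 = "?v1 - sc (- c - 2 * m * c) \<gamma>"
    let ?v3 = "?v2 - sc (-2) \<alpha>"
    let ?v4 = "?v3 - sc (3 * c + 2 * m * c) \<gamma>"
    have "?v1 \<in> \<Delta> - {0}"
      using reflection_root[OF \<alpha> that] by (simp add: coroot_simps)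
    moreover have "cr \<gamma> ?v1 = - c - 2 * m * c"
      by (simp add: coroot_simps algebra_simps)
    ultimately have "?v2 \<in> \<Delta> - {0}"
      using reflection_root[OF \<gamma>] by metis
    moreover have "cr \<alpha> ?v2 = -2"
      by (simp add: coroot_simps algebra_simps)
    ultimately have "?v3 \<in> \<Delta> - {0}"
      using reflection_root[OF \<alpha>] by metis
    moreover have "cr \<gamma> ?v3 = 3 * c + 2 * m * c"
      by (simp add: coroot_simps algebra_simps)
    ultimately have "?v4 \<in> \<Delta> - {0}"
      using reflection_root[OF \<gamma>] by metis
    moreover have "?v4 = \<alpha> - sc ((m + 2) * c) \<gamma>"
    proof -
      have "sc c \<gamma> + sc (c * 2) \<gamma> = sc (c * 3) \<gamma>"
        by (simp flip: X.scale_left_distrib)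
      then show ?thesis
        by (simp add: X.scale_left_distrib X.scale_right_distrib X.scale_left_diff_distrib
            X.scale_right_diff_distrib algebra_simps)
    qed
    ultimately show ?thesis by (simp only:)
  qed
  have "\<alpha> - sc (of_nat (2 * n) * c) \<gamma> \<in> \<Delta> - {0}" for n :: nat
  proof (induction n)
    case (Suc n)
    from step[OF Suc] show ?case by (simp add: algebra_simps)
  qed (use \<alpha> in simp)
  then have "\<forall>n::nat. \<alpha> + sc (of_nat n * (2 * c)) (- \<gamma>) \<in> \<Delta>"
    by (simp add: algebra_simps)
  with no_infinite_root_progression[of "- \<gamma>" "2 * c" \<alpha>] \<gamma> \<open>c \<noteq> 0\<close> show False by simp
qed

text \<open>For distinct roots with \<open>\<langle>\<beta>, \<alpha>\<^sup>\<or>\<rangle> = \<langle>\<gamma>, \<alpha>\<^sup>\<or>\<rangle>\<close> for all \<open>\<alpha>\<close>, the product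
  \<open>s\<^sub>\<beta> s\<^sub>\<gamma>\<close> would be the translation by \<open>2 (\<beta> - \<gamma>)\<close> on the roots \<open>\<beta> + m (\<beta> - \<gamma>)\<close>.\<close>
lemma nonzero_root_eq_if_coroots_eq:
  assumes \<beta>: "\<beta> \<in> \<Delta> - {0}" and \<gamma>: "\<gamma> \<in> \<Delta> - {0}"
    and same: "\<And>\<alpha>. \<alpha> \<in> \<Delta> - {0} \<Longrightarrow> cr \<alpha> \<beta> = cr \<alpha> \<gamma>"
  shows "\<beta> = \<gamma>"
proof (rule ccontr)
  assume "\<beta> \<noteq> \<gamma>"
  define \<delta> where "\<delta> = \<beta> - \<gamma>"
  note coroot_simps = coroot_add[OF \<beta>] coroot_add[OF \<gamma>] coroot_diff[OF \<beta>] coroot_diff[OF \<gamma>]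
    coroot_scale[OF \<beta>] coroot_scale[OF \<gamma>] coroot_self[OF \<beta>] coroot_self[OF \<gamma>] \<delta>_def
  have [simp]: "cr \<gamma> \<beta> = 2" "cr \<beta> \<gamma> = 2"
    using same[OF \<gamma>] same[OF \<beta>] coroot_self[OF \<gamma>] coroot_self[OF \<beta>] by simp_all
  have step: "\<beta> + sc (m + 2) \<delta> \<in> \<Delta> - {0}" if "\<beta> + sc m \<delta> \<in> \<Delta> - {0}" for m
  proof -
    let ?v1 = "\<beta> + sc m \<delta> - sc 2 \<gamma>"
    let ?v2 = "?v1 - sc (-2) \<beta>"
    have "?v1 \<in> \<Delta> - {0}"
      using reflection_root[OF \<gamma> that] by (simp add: coroot_simps)
    moreover have "cr \<beta> ?v1 = -2"
      by (simp add: coroot_simps)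
    ultimately have "?v2 \<in> \<Delta> - {0}"
      using reflection_root[OF \<beta>] by metis
    moreover have "?v2 = \<beta> + sc (m + 2) \<delta>"
      by (simp add: \<delta>_def X.scale_left_distrib X.scale_right_distrib
          X.scale_right_diff_distrib algebra_simps)
    ultimately show ?thesis by (simp only:)
  qed
  have "\<beta> + sc (of_nat n * 2) \<delta> \<in> \<Delta> - {0}" for n :: nat
  proof (induction n)
    case (Suc n)
    from step[OF Suc] show ?case by (simp add: algebra_simps)
  qed (use \<beta> in simp)
  with no_infinite_root_progression[of \<delta> 2 \<beta>] \<open>\<beta> \<noteq> \<gamma>\<close> show False
    by (simp add: \<delta>_def)
qed

lemma coroots_separate_roots:
  assumes "\<beta> \<in> \<Delta>" "\<gamma> \<in> \<Delta>" "\<beta> \<noteq> \<gamma>"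
  shows "\<exists>\<alpha>\<in>\<Delta> - {0}. cr \<alpha> \<beta> \<noteq> cr \<alpha> \<gamma>"
proof (cases "\<beta> = 0 \<or> \<gamma> = 0")
  case True
  then show ?thesis
    using assms coroot_self coroot_zero by (metis DiffI singletonD zero_neq_numeral)
next
  case False
  then show ?thesis
    using assms nonzero_root_eq_if_coroots_eq by blast
qed

lemma root_in_root_lattice:
  assumes "\<beta> \<in> \<Delta>"
  shows "\<beta> \<in> root_lattice sc \<Delta>"
proof -
  have "(\<Sum>\<alpha>\<in>\<Delta>. sc (of_int (if \<alpha> = \<beta> then 1 else 0)) \<alpha>) = (\<Sum>\<alpha>\<in>\<Delta>. if \<alpha> = \<beta> then \<alpha> else 0)"
    by (rule sum.cong) auto
  also have "\<dots> = \<beta>"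
    using assms finite_roots by simp
  finally show ?thesis
    unfolding root_lattice_def by (intro CollectI exI[of _ "\<lambda>\<alpha>. if \<alpha> = \<beta> then 1 else 0"]) simp
qed

end

locale lie_alg =
  fixes scale :: "'k::field \<Rightarrow> 'L::ab_group_add \<Rightarrow> 'L" and br :: "'L \<Rightarrow> 'L \<Rightarrow> 'L"
  assumes lie_algebra: "lie_algebra scale br"
begin

sublocale V: Vector_Spaces.vector_space scale
  using lie_algebra unfolding lie_algebra_def by blast

lemma br_add_left: "br (x + y) z = br x z + br y z"
  and br_add_right: "br x (y + z) = br x y + br x z"
  and br_scale_left: "br (scale c x) y = scale c (br x y)"
  and br_scale_right: "br x (scale c y) = scale c (br x y)"
  and br_self: "br x x = 0"
  and jacobi: "br x (br y z) + br y (br z x) + br z (br x y) = 0"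
  using lie_algebra unfolding lie_algebra_def by blast+

lemma br_0_left [simp]: "br 0 y = 0"
  using br_add_left[of 0 0 y] by simp

lemma br_0_right [simp]: "br x 0 = 0"
  using br_add_right[of x 0 0] by simp

lemma br_anticomm: "br x y = - br y x"
proof -
  have "0 = br (x + y) (x + y)" by (simp add: br_self)
  also have "\<dots> = (br x x + br x y) + (br y x + br y y)" by (simp add: br_add_left br_add_right)
  also have "\<dots> = br x y + br y x" by (simp add: br_self)
  finally show ?thesis by (simp add: eq_neg_iff_add_eq_0)
qed

lemma br_sum_left: "br (sum f S) y = (\<Sum>i\<in>S. br (f i) y)"
  by (induction S rule: infinite_finite_induct) (simp_all add: br_add_left)

lemma br_sum_right: "br y (sum f S) = (\<Sum>i\<in>S. br y (f i))"
  by (induction S rule: infinite_finite_induct) (simp_all add: br_add_right)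

lemma lie_ideal_subspace: "lie_ideal scale br I \<Longrightarrow> V.subspace I"
  unfolding lie_ideal_def by blast

lemma lie_ideal_br_right: "lie_ideal scale br I \<Longrightarrow> y \<in> I \<Longrightarrow> br x y \<in> I"
  unfolding lie_ideal_def by blast

lemma lie_ideal_br_left:
  assumes "lie_ideal scale br I" "y \<in> I"
  shows "br y x \<in> I"
  using lie_ideal_br_right[OF assms] lie_ideal_subspace[OF assms(1)] V.subspace_neg br_anticomm
  by metis

lemma lie_ideal_imp_subalgebra: "lie_ideal scale br I \<Longrightarrow> lie_subalgebra scale br I"
  unfolding lie_ideal_def lie_subalgebra_def by blast

lemma centralizer_subalgebra: "lie_subalgebra scale br {z. br a z = 0}"
  unfolding lie_subalgebra_def
proof (intro conjI ballI V.subspaceI)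
  fix x y assume "x \<in> {z. br a z = 0}" "y \<in> {z. br a z = 0}"
  then have "br a x = 0" "br y a = 0"
    using br_anticomm[of y a] by auto
  then show "br x y \<in> {z. br a z = 0}"
    using jacobi[of a x y] by simp
qed (auto simp: br_add_right br_scale_right)

lemma br_eq_0_if_bracket_set_eq_0:
  assumes "lie_bracket_set scale br I J = {0}" "x \<in> I" "y \<in> J"
  shows "br x y = 0"
proof -
  have "br x y \<in> lie_bracket_set scale br I J"
    unfolding lie_bracket_set_def using assms(2,3) by (blast intro: V.span_base)
  with assms(1) show ?thesis by blast
qed

lemma br_span_eq_0:
  assumes "\<And>w. w \<in> W \<Longrightarrow> br w v = 0" "z \<in> V.span W"
  shows "br z v = 0"
proof -
  have "V.subspace {z. br z v = 0}"
    unfolding V.subspace_def by (auto simp: br_add_left br_scale_left)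
  then have "V.span W \<subseteq> {z. br z v = 0}"
    using assms(1) by (intro V.span_minimal) auto
  with assms(2) show ?thesis by blast
qed

end

section \<open>Graded Lie algebras\<close>

locale graded_lie_alg = lie_alg scale br
  for scale :: "'k::field \<Rightarrow> 'L::ab_group_add \<Rightarrow> 'L" and br +
  fixes Lc :: "'i::ab_group_add \<Rightarrow> 'L set"
  assumes subspace_component: "V.subspace (Lc i)"
    and decomposition_exists: "\<exists>S f. finite S \<and> (\<forall>i\<in>S. f i \<in> Lc i) \<and> x = sum f S"
    and decomposition_independent:
      "finite S \<Longrightarrow> \<forall>i\<in>S. f i \<in> Lc i \<Longrightarrow> sum f S = 0 \<Longrightarrow> i \<in> S \<Longrightarrow> f i = 0"
    and br_component: "x \<in> Lc i \<Longrightarrow> y \<in> Lc j \<Longrightarrow> br x y \<in> Lc (i + j)"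
begin

definition is_decomposition :: "'L \<Rightarrow> ('i \<Rightarrow> 'L) \<Rightarrow> bool" where
  "is_decomposition x c \<longleftrightarrow> finite {i. c i \<noteq> 0} \<and> (\<forall>i. c i \<in> Lc i) \<and> x = sum c {i. c i \<noteq> 0}"

definition hcomp :: "'L \<Rightarrow> 'i \<Rightarrow> 'L" where
  "hcomp x = (THE c. is_decomposition x c)"

definition hsupp :: "'L \<Rightarrow> 'i set" where
  "hsupp x = {i. hcomp x i \<noteq> 0}"

lemma zero_in_component: "0 \<in> Lc i"
  using V.subspace_0[OF subspace_component] .

lemma sum_nonzero_eq: "finite T \<Longrightarrow> {i. c i \<noteq> 0} \<subseteq> T \<Longrightarrow> sum c {i. c i \<noteq> 0} = sum c T"
  by (rule sum.mono_neutral_left) auto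

lemma is_decomposition_unique:
  assumes "is_decomposition x c" "is_decomposition x c'"
  shows "c = c'"
proof
  fix i
  let ?T = "{i. c i \<noteq> 0} \<union> {i. c' i \<noteq> 0}"
  have fin: "finite ?T" using assms unfolding is_decomposition_def by auto
  have "sum c ?T = x"
    using assms(1) fin unfolding is_decomposition_def by (metis sum_nonzero_eq Un_upper1)
  moreover have "sum c' ?T = x"
    using assms(2) fin unfolding is_decomposition_def by (metis sum_nonzero_eq Un_upper2)
  ultimately have "sum (\<lambda>i. c i - c' i) ?T = 0" by (simp add: sum_subtractf)
  moreover have "\<forall>i\<in>?T. c i - c' i \<in> Lc i"
    using assms unfolding is_decomposition_def by (auto intro: V.subspace_diff[OF subspace_component])
  ultimately have "c i - c' i = 0" if "i \<in> ?T"
    using decomposition_independent[OF fin, of "\<lambda>i. c i - c' i"] that by blast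
  then show "c i = c' i" by (cases "i \<in> ?T") auto
qed

lemma is_decomposition_of_sum:
  assumes "finite S" "\<forall>i\<in>S. f i \<in> Lc i" "x = sum f S"
  shows "is_decomposition x (\<lambda>i. if i \<in> S then f i else 0)"
proof -
  let ?c = "\<lambda>i. if i \<in> S then f i else 0"
  have nonzero: "{i. ?c i \<noteq> 0} \<subseteq> S" by auto
  have "sum ?c {i. ?c i \<noteq> 0} = x"
    using sum_nonzero_eq[OF assms(1) nonzero] assms(3) by simp
  then show ?thesis
    unfolding is_decomposition_def using assms zero_in_component finite_subset[OF nonzero] by auto
qed

lemma hcomp_unique:
  assumes "finite S" "\<forall>i\<in>S. f i \<in> Lc i" "x = sum f S"
  shows "hcomp x i = (if i \<in> S then f i else 0)"
proof -
  have "hcomp x = (\<lambda>i. if i \<in> S then f i else 0)"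
    unfolding hcomp_def
    by (rule the_equality) (use is_decomposition_of_sum[OF assms] is_decomposition_unique in blast)+
  then show ?thesis by simp
qed

lemma is_decomposition_hcomp: "is_decomposition x (hcomp x)"
proof -
  obtain S f where "finite S" "\<forall>i\<in>S. f i \<in> Lc i" "x = sum f S"
    using decomposition_exists by blast
  from is_decomposition_of_sum[OF this] have "\<exists>!c. is_decomposition x c"
    using is_decomposition_unique by blast
  then show ?thesis unfolding hcomp_def by (rule theI')
qed

lemma hcomp_in_component: "hcomp x i \<in> Lc i"
  and finite_hsupp: "finite (hsupp x)"
  and sum_hcomp: "sum (hcomp x) (hsupp x) = x"
  using is_decomposition_hcomp[of x] unfolding is_decomposition_def hsupp_def by auto

lemma sum_hcomp_superset: "finite T \<Longrightarrow> hsupp x \<subseteq> T \<Longrightarrow> sum (hcomp x) T = x"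
  using sum_hcomp[of x] by (metis hsupp_def sum_nonzero_eq)

lemma hsupp_iff: "i \<in> hsupp x \<longleftrightarrow> hcomp x i \<noteq> 0"
  unfolding hsupp_def by simp

lemma hsupp_nonempty: "x \<noteq> 0 \<Longrightarrow> hsupp x \<noteq> {}"
  using sum_hcomp[of x] by auto

lemma hcomp_add: "hcomp (x + y) i = hcomp x i + hcomp y i"
proof -
  let ?T = "hsupp x \<union> hsupp y"
  have fin: "finite ?T" using finite_hsupp by auto
  have "sum (hcomp x) ?T = x" "sum (hcomp y) ?T = y"
    using sum_hcomp_superset[OF fin] by auto
  then have "x + y = sum (hcomp x) ?T + sum (hcomp y) ?T"
    by simp
  then have "x + y = (\<Sum>i\<in>?T. hcomp x i + hcomp y i)"
    by (simp only: sum.distrib)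
  moreover have "\<forall>i\<in>?T. hcomp x i + hcomp y i \<in> Lc i"
    using hcomp_in_component V.subspace_add[OF subspace_component] by blast
  ultimately have "hcomp (x + y) i = (if i \<in> ?T then hcomp x i + hcomp y i else 0)"
    by (intro hcomp_unique[OF fin])
  then show ?thesis by (auto simp: hsupp_def)
qed

lemma hcomp_scale: "hcomp (scale c x) i = scale c (hcomp x i)"
proof -
  have "scale c x = (\<Sum>i\<in>hsupp x. scale c (hcomp x i))"
    by (simp add: sum_hcomp flip: V.scale_sum_right)
  moreover have "\<forall>i\<in>hsupp x. scale c (hcomp x i) \<in> Lc i"
    using hcomp_in_component V.subspace_scale[OF subspace_component] by blast
  ultimately have "hcomp (scale c x) i = (if i \<in> hsupp x then scale c (hcomp x i) else 0)"
    by (intro hcomp_unique[OF finite_hsupp])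
  then show ?thesis by (auto simp: hsupp_def)
qed

lemma hcomp_diff: "hcomp (x - y) i = hcomp x i - hcomp y i"
  using hcomp_add[of "x - y" y i] by (simp add: eq_diff_eq)

lemma hcomp_0 [simp]: "hcomp 0 i = 0"
  using hcomp_diff[of 0 0 i] by simp

lemma hcomp_sum: "hcomp (sum f S) i = (\<Sum>s\<in>S. hcomp (f s) i)"
  by (induction S rule: infinite_finite_induct) (simp_all add: hcomp_add)

lemma hcomp_br_homogeneous:
  assumes z: "z \<in> Lc j"
  shows "hcomp (br z x) i = br z (hcomp x (i - j))"
proof -
  let ?S = "(\<lambda>t. j + t) ` hsupp x"
  have "br z x = (\<Sum>t\<in>hsupp x. br z (hcomp x t))"
    by (simp add: sum_hcomp flip: br_sum_right)
  also have "\<dots> = (\<Sum>s\<in>?S. br z (hcomp x (s - j)))"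
    by (subst sum.reindex) (auto intro: inj_onI)
  finally have "br z x = (\<Sum>s\<in>?S. br z (hcomp x (s - j)))" .
  moreover have "\<forall>s\<in>?S. br z (hcomp x (s - j)) \<in> Lc s"
    using br_component[OF z hcomp_in_component] by auto
  ultimately have "hcomp (br z x) i = (if i \<in> ?S then br z (hcomp x (i - j)) else 0)"
    by (intro hcomp_unique) (simp_all add: finite_hsupp)
  moreover have "hcomp x (i - j) = 0" if "i \<notin> ?S"
  proof (rule ccontr)
    assume "hcomp x (i - j) \<noteq> 0"
    then have "j + (i - j) \<in> ?S" by (intro imageI) (simp add: hsupp_iff)
    with that show False by simp
  qed
  ultimately show ?thesis by simp
qed

lemma hcomp_br:
  "hcomp (br x y) k = (\<Sum>i\<in>hsupp x. br (hcomp x i) (hcomp y (k - i)))"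
proof -
  have "hcomp (br x y) k = hcomp (\<Sum>i\<in>hsupp x. br (hcomp x i) y) k"
    by (simp add: sum_hcomp flip: br_sum_left)
  also have "\<dots> = (\<Sum>i\<in>hsupp x. br (hcomp x i) (hcomp y (k - i)))"
    by (simp add: hcomp_sum hcomp_br_homogeneous[OF hcomp_in_component])
  finally show ?thesis .
qed

lemma lie_ideal_span_if_br_closed:
  assumes "\<And>z i w. z \<in> Lc i \<Longrightarrow> w \<in> W \<Longrightarrow> br z w \<in> W"
  shows "lie_ideal scale br (V.span W)"
proof -
  have homogeneous: "br z w \<in> V.span W" if "z \<in> Lc i" "w \<in> V.span W" for z i w
  proof -
    have "V.subspace {w. br z w \<in> V.span W}"
      unfolding V.subspace_def
      by (auto simp: br_add_right br_scale_right intro: V.span_add V.span_scale V.span_zero)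
    moreover have "W \<subseteq> {w. br z w \<in> V.span W}"
      using assms[OF that(1)] V.span_base by blast
    then have "V.span W \<subseteq> {w. br z w \<in> V.span W}"
      using calculation by (rule V.span_minimal)
    then show ?thesis
      using that(2) by blast
  qed
  have "br z w \<in> V.span W" if "w \<in> V.span W" for z w
  proof -
    have "br z w = (\<Sum>i\<in>hsupp z. br (hcomp z i) w)"
      by (simp add: sum_hcomp flip: br_sum_left)
    also have "\<dots> \<in> V.span W"
      using homogeneous[OF hcomp_in_component that] by (blast intro: V.span_sum)
    finally show ?thesis .
  qed
  then show ?thesis
    unfolding lie_ideal_def by simp
qed

end

section \<open>Translation invariant orders\<close>

locale invariant_order =
  fixes lt :: "'g::ab_group_add \<Rightarrow> 'g \<Rightarrow> bool"
  assumes lt_irrefl: "\<not> lt a a"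
    and lt_trans: "lt a b \<Longrightarrow> lt b c \<Longrightarrow> lt a c"
    and lt_total: "a \<noteq> b \<Longrightarrow> lt a b \<or> lt b a"
    and lt_add_right: "lt a b \<Longrightarrow> lt (a + c) (b + c)"
begin

lemma finite_has_maximal: "finite S \<Longrightarrow> S \<noteq> {} \<Longrightarrow> \<exists>m\<in>S. \<forall>s\<in>S. \<not> lt m s"
proof (induction S rule: finite_ne_induct)
  case (insert a F)
  then obtain m where "m \<in> F" "\<forall>s\<in>F. \<not> lt m s" by blast
  then show ?case
    using lt_irrefl lt_trans by (cases "lt m a") blast+
qed (use lt_irrefl in auto)

end

definition lex_less :: "(nat \<Rightarrow> int) \<Rightarrow> (nat \<Rightarrow> int) \<Rightarrow> bool" where
  "lex_less u v \<longleftrightarrow> (\<exists>i. u i < v i \<and> (\<forall>j<i. u j = v j))"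

lemma invariant_order_lex_less: "invariant_order lex_less"
proof
  show "\<not> lex_less u u" for u
    unfolding lex_less_def by auto
  show "lex_less u w" if uv: "lex_less u v" and vw: "lex_less v w" for u v w
  proof -
    obtain i where i: "u i < v i" "\<forall>j<i. u j = v j"
      using uv unfolding lex_less_def by blast
    obtain k where k: "v k < w k" "\<forall>j<k. v j = w j"
      using vw unfolding lex_less_def by blast
    show ?thesis
    proof (cases "i \<le> k")
      case True
      then show ?thesis
        unfolding lex_less_def using i k by (intro exI[of _ i]) (auto simp: le_less)
    next
      case False
      then show ?thesis
        unfolding lex_less_def using i k by (intro exI[of _ k]) auto
    qed
  qed
  show "lex_less u v \<or> lex_less v u" if "u \<noteq> v" for u v
  proof -
    from \<open>u \<noteq> v\<close> obtain i0 where "u i0 \<noteq> v i0" by blast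
    define i where "i = (LEAST i. u i \<noteq> v i)"
    have "u i \<noteq> v i"
      unfolding i_def by (rule LeastI[of _ i0]) fact
    moreover have "\<forall>j<i. u j = v j"
      unfolding i_def using not_less_Least by blast
    ultimately show ?thesis
      unfolding lex_less_def by (metis linorder_neqE)
  qed
  show "lex_less u v \<Longrightarrow> lex_less (u + w) (v + w)" for u v w
    unfolding lex_less_def by auto
qed

lemma free_fg_abelian_invariant_order:
  assumes "free_fg_abelian TYPE('g::ab_group_add)"
  shows "\<exists>lt :: 'g \<Rightarrow> 'g \<Rightarrow> bool. invariant_order lt"
proof -
  obtain n and \<phi> :: "'g \<Rightarrow> nat \<Rightarrow> int" where "bij_betw \<phi> UNIV {v. \<forall>i\<ge>n. v i = 0}"
    and additive: "\<And>a b. \<phi> (a + b) = \<phi> a + \<phi> b"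
    using assms unfolding free_fg_abelian_def plus_fun_def by blast
  then have "inj \<phi>" by (simp add: bij_betw_def)
  interpret lex: invariant_order lex_less by (rule invariant_order_lex_less)
  have "invariant_order (\<lambda>a b. lex_less (\<phi> a) (\<phi> b))"
  proof
    show "\<not> lex_less (\<phi> a) (\<phi> a)" for a
      by (rule lex.lt_irrefl)
    show "lex_less (\<phi> a) (\<phi> c)" if "lex_less (\<phi> a) (\<phi> b)" "lex_less (\<phi> b) (\<phi> c)" for a b c
      using that by (rule lex.lt_trans)
    show "lex_less (\<phi> a) (\<phi> b) \<or> lex_less (\<phi> b) (\<phi> a)" if "a \<noteq> b" for a b
      using that \<open>inj \<phi>\<close> lex.lt_total by (metis injD)
    show "lex_less (\<phi> (a + c)) (\<phi> (b + c))" if "lex_less (\<phi> a) (\<phi> b)" for a b c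
      using lex.lt_add_right[OF that] by (simp add: additive)
  qed
  then show ?thesis by blast
qed

section \<open>Top degree components\<close>

locale ordered_graded_lie_alg = graded_lie_alg scale br Lc + invariant_order lt
  for scale :: "'k::field \<Rightarrow> 'L::ab_group_add \<Rightarrow> 'L" and br
    and Lc :: "'x::ab_group_add \<times> 'g::ab_group_add \<Rightarrow> 'L set"
    and lt :: "'g \<Rightarrow> 'g \<Rightarrow> bool"
begin

definition degree_bound :: "'L \<Rightarrow> 'g \<Rightarrow> bool" where
  "degree_bound x l \<longleftrightarrow> (\<forall>i\<in>hsupp x. \<not> lt l (snd i))"

lemma top_degree_exists:
  assumes "x \<noteq> 0"
  shows "\<exists>i\<in>hsupp x. degree_bound x (snd i)"
proof -
  obtain m where "m \<in> snd ` hsupp x" "\<forall>s\<in>snd ` hsupp x. \<not> lt m s"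
    using finite_has_maximal[of "snd ` hsupp x"] finite_hsupp hsupp_nonempty[OF assms] by blast
  then show ?thesis
    unfolding degree_bound_def by blast
qed

lemma degree_bound_br:
  assumes z: "z \<in> Lc (g, m)" and "degree_bound x l"
  shows "degree_bound (br z x) (m + l)"
  unfolding degree_bound_def
proof (intro ballI notI)
  fix j assume "j \<in> hsupp (br z x)" "lt (m + l) (snd j)"
  then have "j - (g, m) \<in> hsupp x"
    by (auto simp: hsupp_iff hcomp_br_homogeneous[OF z])
  moreover have "lt l (snd j - m)"
    using lt_add_right[OF \<open>lt (m + l) (snd j)\<close>, of "- m"] by (simp add: algebra_simps)
  ultimately show False
    using \<open>degree_bound x l\<close> unfolding degree_bound_def by auto
qed

text \<open>In the expansion of \<open>hcomp (br x y)\<close> by \<open>hcomp_br\<close>, the top degree leaves only the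
  term \<open>i = (b, l)\<close>: \<open>y\<close> lives on a single root, which pins down the root of \<open>i\<close>, and the
  degree bounds exclude every other degree.\<close>
lemma hcomp_br_top_degree:
  assumes x: "degree_bound x l" and y: "degree_bound y \<mu>" and root: "\<forall>i\<in>hsupp y. fst i = \<gamma>"
  shows "hcomp (br x y) (b + \<gamma>, l + \<mu>) = br (hcomp x (b, l)) (hcomp y (\<gamma>, \<mu>))"
proof -
  let ?k = "(b + \<gamma>, l + \<mu>)"
  have vanish: "br (hcomp x i) (hcomp y (?k - i)) = 0" if "i \<in> hsupp x" "i \<noteq> (b, l)" for i
  proof (rule ccontr)
    assume "br (hcomp x i) (hcomp y (?k - i)) \<noteq> 0"
    then have "?k - i \<in> hsupp y" by (auto simp: hsupp_iff)
    with root have "fst i = b" by (auto simp: algebra_simps)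
    with that(2) have "snd i \<noteq> l" by (metis prod.collapse)
    with x that(1) have "lt (snd i) l"
      unfolding degree_bound_def using lt_total by blast
    then have "lt \<mu> (l + \<mu> - snd i)"
      using lt_add_right[of "snd i" l "\<mu> - snd i"] by (simp add: algebra_simps)
    with y \<open>?k - i \<in> hsupp y\<close> show False
      unfolding degree_bound_def by auto
  qed
  have "hcomp (br x y) ?k = (\<Sum>i\<in>hsupp x. if i = (b, l) then br (hcomp x (b, l)) (hcomp y (?k - (b, l))) else 0)"
    unfolding hcomp_br by (rule sum.cong) (auto dest: vanish)
  also have "\<dots> = br (hcomp x (b, l)) (hcomp y (\<gamma>, \<mu>))"
    by (simp add: finite_hsupp hsupp_iff)
  finally show ?thesis .
qed

definition top_components :: "'L set \<Rightarrow> 'L set" where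
  "top_components I = {hcomp x (b, l) | x b l. x \<in> I \<and> degree_bound x l}"

lemma lie_ideal_span_top_components:
  assumes I: "lie_ideal scale br I"
  shows "lie_ideal scale br (V.span (top_components I))"
proof (rule lie_ideal_span_if_br_closed)
  fix z i w
  assume z: "z \<in> Lc i" and "w \<in> top_components I"
  then obtain x b l where x: "x \<in> I" "degree_bound x l" and w: "w = hcomp x (b, l)"
    unfolding top_components_def by blast
  obtain g m where z': "z \<in> Lc (g, m)" using z by (cases i) simp
  have "br z w = hcomp (br z x) (g + b, m + l)"
    unfolding w hcomp_br_homogeneous[OF z'] by simp
  moreover have "br z x \<in> I" "degree_bound (br z x) (m + l)"
    using lie_ideal_br_right[OF I x(1)] degree_bound_br[OF z' x(2)] by simp_all
  ultimately show "br z w \<in> top_components I"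
    unfolding top_components_def by blast
qed

end

section \<open>Centreless Lie tori\<close>

locale centreless_lie_torus =
  fixes sc :: "'k::field_char_0 \<Rightarrow> 'x::ab_group_add \<Rightarrow> 'x" and \<Delta> :: "'x set"
    and cr :: "'x \<Rightarrow> 'x \<Rightarrow> 'k" and scale :: "'k \<Rightarrow> 'L::ab_group_add \<Rightarrow> 'L"
    and br :: "'L \<Rightarrow> 'L \<Rightarrow> 'L" and Lc :: "'x \<times> 'g::ab_group_add \<Rightarrow> 'L set"
  assumes lie_torus: "lie_torus sc \<Delta> cr scale br Lc"
    and centreless: "centreless br"
begin

abbreviation Q :: "'x set" where "Q \<equiv> root_lattice sc \<Delta>"

sublocale root_system sc \<Delta> cr
  using lie_torus unfolding lie_torus_def by unfold_locales blast

sublocale graded_lie_alg scale br Lc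
proof -
  have "graded_lie_algebra scale br Q Lc"
    using lie_torus unfolding lie_torus_def by blast
  then obtain "lie_algebra scale br" and sub: "\<forall>i. module.subspace scale (Lc i)"
    and dec: "\<forall>x. \<exists>S f. finite S \<and> (\<forall>i\<in>S. f i \<in> Lc i) \<and> x = sum f S"
    and ind: "\<forall>S f. finite S \<longrightarrow> (\<forall>i\<in>S. f i \<in> Lc i) \<longrightarrow> sum f S = 0 \<longrightarrow> (\<forall>i\<in>S. f i = 0)"
    and hom: "\<forall>\<alpha> l \<beta> m x y. x \<in> Lc (\<alpha>, l) \<longrightarrow> y \<in> Lc (\<beta>, m) \<longrightarrow> br x y \<in> Lc (\<alpha> + \<beta>, l + m)"
    unfolding graded_lie_algebra_def by (elim conjE) (rule that)
  then show "graded_lie_alg scale br Lc"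
  proof unfold_locales
    show "br x y \<in> Lc (i + j)" if "x \<in> Lc i" "y \<in> Lc j" for x y i j
      using hom that by (cases i, cases j) simp
  qed (use sub dec ind in blast)+
qed

lemma component_outside_root_lattice: "\<alpha> \<notin> Q \<Longrightarrow> Lc (\<alpha>, l) = {0}"
proof -
  have "graded_lie_algebra scale br Q Lc"
    using lie_torus unfolding lie_torus_def by (elim conjE) assumption
  then have "\<forall>\<alpha> l. \<alpha> \<notin> Q \<longrightarrow> Lc (\<alpha>, l) = {0}"
    unfolding graded_lie_algebra_def by (elim conjE) assumption
  then show "\<alpha> \<notin> Q \<Longrightarrow> Lc (\<alpha>, l) = {0}" by blast
qed

lemma roots_eq: "{\<alpha> \<in> Q. Lroot Lc \<alpha> \<noteq> {0}} = \<Delta>"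
  using lie_torus unfolding lie_torus_def by (elim conjE) assumption

lemma generated_by_root_spaces: "lie_generated scale br (\<Union>\<alpha>\<in>\<Delta> - {0}. Lroot Lc \<alpha>) = UNIV"
  using lie_torus unfolding lie_torus_def by (elim conjE) assumption

lemma component_subset_Lroot: "u \<in> Lc (\<alpha>, l) \<Longrightarrow> u \<in> Lroot Lc \<alpha>"
  unfolding Lroot_def by (intro CollectI exI[of _ "{l}"] exI[of _ "\<lambda>_. u"]) auto

lemma Lroot_subset_subspace: "V.subspace K \<Longrightarrow> (\<And>l. Lc (\<alpha>, l) \<subseteq> K) \<Longrightarrow> Lroot Lc \<alpha> \<subseteq> K"
  unfolding Lroot_def by (auto intro!: V.subspace_sum)

lemma root_of_nonzero_component:
  assumes "u \<in> Lc (\<beta>, l)" "u \<noteq> 0"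
  shows "\<beta> \<in> \<Delta>"
proof -
  have "\<beta> \<in> Q" using assms component_outside_root_lattice by blast
  moreover have "Lroot Lc \<beta> \<noteq> {0}" using component_subset_Lroot[OF assms(1)] assms(2) by blast
  ultimately show ?thesis using roots_eq by blast
qed

lemma nonzero_component_exists:
  assumes "\<alpha> \<in> \<Delta>"
  shows "\<exists>l u. u \<in> Lc (\<alpha>, l) \<and> u \<noteq> 0"
proof (rule ccontr)
  assume "\<not> ?thesis"
  then have "Lc (\<alpha>, l) \<subseteq> {0}" for l by blast
  then have "Lroot Lc \<alpha> \<subseteq> {0}"
    by (intro Lroot_subset_subspace V.subspace_single_0)
  moreover have "0 \<in> Lroot Lc \<alpha>"
    using component_subset_Lroot[OF zero_in_component] .
  moreover have "Lroot Lc \<alpha> \<noteq> {0}"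
    using roots_eq assms by blast
  ultimately show False by blast
qed

lemma centre_eq_0:
  assumes "\<And>z. br z v = 0"
  shows "v = 0"
proof -
  have "br v x = 0" for x
    using assms[of x] br_anticomm[of v x] by simp
  then show ?thesis
    using centreless unfolding centreless_def by blast
qed

definition sl2_pair :: "'x \<Rightarrow> 'g \<Rightarrow> 'L \<Rightarrow> 'L \<Rightarrow> bool" where
  "sl2_pair \<alpha> l e f \<longleftrightarrow> e \<in> Lc (\<alpha>, l) \<and> f \<in> Lc (- \<alpha>, - l) \<and> Lc (\<alpha>, l) = range (\<lambda>c. scale c e) \<and>
     (\<forall>\<beta>\<in>Q. \<forall>x\<in>Lroot Lc \<beta>. br (br e f) x = scale (cr \<alpha> \<beta>) x)"

lemma sl2_pair_exists:
  assumes "\<alpha> \<in> \<Delta> - {0}" "u \<in> Lc (\<alpha>, l)" "u \<noteq> 0"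
  shows "\<exists>e f. sl2_pair \<alpha> l e f"
proof -
  have "\<forall>\<alpha>\<in>\<Delta> - {0}. \<forall>l. Lc (\<alpha>, l) \<noteq> {0} \<longrightarrow>
      (\<exists>e f. e \<in> Lc (\<alpha>, l) \<and> f \<in> Lc (- \<alpha>, - l) \<and>
        Lc (\<alpha>, l) = range (\<lambda>c. scale c e) \<and> Lc (- \<alpha>, - l) = range (\<lambda>c. scale c f) \<and>
        (\<forall>\<beta>\<in>Q. \<forall>x\<in>Lroot Lc \<beta>. br (br e f) x = scale (cr \<alpha> \<beta>) x))"
    using lie_torus unfolding lie_torus_def by (elim conjE) assumption
  moreover have "Lc (\<alpha>, l) \<noteq> {0}"
    using assms(2,3) by blast
  ultimately show ?thesis
    using assms(1) unfolding sl2_pair_def by meson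
qed

lemma hcomp_sl2_pair_action:
  assumes "sl2_pair \<alpha> l e f"
  shows "hcomp (br (br e f) y) (\<beta>, m) = scale (cr \<alpha> \<beta>) (hcomp y (\<beta>, m))"
proof -
  have "e \<in> Lc (\<alpha>, l)" "f \<in> Lc (- \<alpha>, - l)"
    using assms unfolding sl2_pair_def by blast+
  then have "br e f \<in> Lc 0"
    using br_component[of e "(\<alpha>, l)" f "(- \<alpha>, - l)"] by (simp add: zero_prod_def)
  then have "hcomp (br (br e f) y) (\<beta>, m) = br (br e f) (hcomp y (\<beta>, m))"
    using hcomp_br_homogeneous[of "br e f" 0 y] by simp
  also have "\<dots> = scale (cr \<alpha> \<beta>) (hcomp y (\<beta>, m))"
  proof (cases "hcomp y (\<beta>, m) = 0")
    case False
    with hcomp_in_component have "\<beta> \<in> Q" "hcomp y (\<beta>, m) \<in> Lroot Lc \<beta>"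
      using root_of_nonzero_component root_in_root_lattice component_subset_Lroot by blast+
    then show ?thesis
      using assms unfolding sl2_pair_def by blast
  qed simp
  finally show ?thesis .
qed

lemma lie_ideal_contains_Lroot:
  assumes K: "lie_ideal scale br K" and \<alpha>: "\<alpha> \<in> \<Delta> - {0}"
    and u: "u \<in> Lc (\<alpha>, l)" "u \<in> K" "u \<noteq> 0" and \<gamma>: "\<gamma> \<in> Q" "cr \<alpha> \<gamma> \<noteq> 0"
  shows "Lroot Lc \<gamma> \<subseteq> K"
proof
  obtain e f where ef: "sl2_pair \<alpha> l e f"
    using sl2_pair_exists[OF \<alpha> u(1,3)] by blast
  then obtain c where "u = scale c e"
    using u(1) unfolding sl2_pair_def by blast
  with u(3) have "e = scale (inverse c) u" by auto
  then have "e \<in> K"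
    using V.subspace_scale[OF lie_ideal_subspace[OF K] u(2)] by simp
  fix x assume "x \<in> Lroot Lc \<gamma>"
  then have "br (br e f) x = scale (cr \<alpha> \<gamma>) x"
    using ef \<gamma>(1) unfolding sl2_pair_def by blast
  moreover have "br (br e f) x \<in> K"
    using lie_ideal_br_left[OF K lie_ideal_br_left[OF K \<open>e \<in> K\<close>]] .
  ultimately have "scale (inverse (cr \<alpha> \<gamma>)) (scale (cr \<alpha> \<gamma>) x) \<in> K"
    using V.subspace_scale[OF lie_ideal_subspace[OF K]] by metis
  then show "x \<in> K" using \<gamma>(2) by simp
qed

text \<open>The nonzero roots whose root spaces lie in \<open>K\<close> are orthogonal to the remaining ones, so by
  irreducibility either all or none of them do.\<close>
lemma lie_ideal_contains_all_Lroot: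
  assumes K: "lie_ideal scale br K" and \<alpha>: "\<alpha> \<in> \<Delta> - {0}" "Lroot Lc \<alpha> \<subseteq> K"
  shows "\<Delta> - {0} \<subseteq> {\<gamma>. Lroot Lc \<gamma> \<subseteq> K}"
proof (rule ccontr)
  define \<Phi> where "\<Phi> = {\<gamma> \<in> \<Delta> - {0}. Lroot Lc \<gamma> \<subseteq> K}"
  assume "\<not> ?thesis"
  then have "(\<Delta> - {0}) - \<Phi> \<noteq> {}" unfolding \<Phi>_def by blast
  moreover have "\<Phi> \<noteq> {}" using \<alpha> unfolding \<Phi>_def by blast
  moreover have "cr \<beta> \<gamma> = 0 \<and> cr \<gamma> \<beta> = 0" if \<beta>: "\<beta> \<in> \<Phi>" and \<gamma>: "\<gamma> \<in> (\<Delta> - {0}) - \<Phi>" for \<beta> \<gamma>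
  proof -
    obtain l u where u: "u \<in> Lc (\<beta>, l)" "u \<noteq> 0"
      using nonzero_component_exists \<beta> unfolding \<Phi>_def by blast
    then have "u \<in> K" using component_subset_Lroot \<beta> unfolding \<Phi>_def by blast
    then have "cr \<beta> \<gamma> = 0"
      using lie_ideal_contains_Lroot[OF K _ u(1) _ u(2) root_in_root_lattice] \<beta> \<gamma>
      unfolding \<Phi>_def by blast
    then show ?thesis
      using coroot_eq_0_sym \<beta> \<gamma> unfolding \<Phi>_def by blast
  qed
  ultimately show False
    using roots_not_decomposable by (metis (no_types, lifting) Diff_disjoint Diff_partition \<Phi>_def mem_Collect_eq subsetI)
qed

lemma subalgebra_eq_UNIV:
  assumes "lie_subalgebra scale br A" "\<And>\<alpha>. \<alpha> \<in> \<Delta> - {0} \<Longrightarrow> Lroot Lc \<alpha> \<subseteq> A"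
  shows "A = UNIV"
proof -
  have "lie_generated scale br (\<Union>\<alpha>\<in>\<Delta> - {0}. Lroot Lc \<alpha>) \<subseteq> A"
    unfolding lie_generated_def using assms by blast
  then show ?thesis using generated_by_root_spaces by blast
qed

text \<open>A nonzero element of \<open>K\<close> of root \<open>0\<close> cannot centralise all the root spaces \<open>Lroot Lc \<alpha>\<close>,
  \<open>\<alpha> \<noteq> 0\<close>, since these generate the centreless algebra.\<close>
lemma lie_ideal_contains_nonzero_root_vector:
  assumes K: "lie_ideal scale br K" and a: "a \<in> Lc (\<beta>, l)" "a \<in> K" "a \<noteq> 0"
  shows "\<exists>\<alpha> m u. \<alpha> \<in> \<Delta> - {0} \<and> u \<in> Lc (\<alpha>, m) \<and> u \<in> K \<and> u \<noteq> 0"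
proof (cases "\<beta> = 0")
  case False
  then show ?thesis using a root_of_nonzero_component by blast
next
  case True
  show ?thesis
  proof (rule ccontr)
    assume none: "\<not> ?thesis"
    have "Lc (\<alpha>, m) \<subseteq> {z. br a z = 0}" if "\<alpha> \<in> \<Delta> - {0}" for \<alpha> m
    proof
      fix z assume "z \<in> Lc (\<alpha>, m)"
      then have "br a z \<in> Lc (\<alpha>, l + m)" "br a z \<in> K"
        using br_component[OF a(1)] lie_ideal_br_left[OF K a(2)] True by auto
      then show "z \<in> {z. br a z = 0}"
        using none that by blast
    qed
    then have "Lroot Lc \<alpha> \<subseteq> {z. br a z = 0}" if "\<alpha> \<in> \<Delta> - {0}" for \<alpha>
      using Lroot_subset_subspace centralizer_subalgebra that unfolding lie_subalgebra_def by blast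
    then have "{z. br a z = 0} = UNIV"
      using subalgebra_eq_UNIV[OF centralizer_subalgebra] by blast
    then have "br z a = 0" for z
      using br_anticomm[of z a] by auto
    then show False
      using centre_eq_0 a(3) by blast
  qed
qed

lemma lie_ideal_eq_UNIV:
  assumes K: "lie_ideal scale br K" and "a \<in> Lc (\<beta>, l)" "a \<in> K" "a \<noteq> 0"
  shows "K = UNIV"
proof -
  obtain \<alpha> m u where \<alpha>: "\<alpha> \<in> \<Delta> - {0}" and u: "u \<in> Lc (\<alpha>, m)" "u \<in> K" "u \<noteq> 0"
    using lie_ideal_contains_nonzero_root_vector[OF assms] by blast
  have "Lroot Lc \<alpha> \<subseteq> K"
    using lie_ideal_contains_Lroot[OF K \<alpha> u root_in_root_lattice] \<alpha> coroot_self by simp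
  then have "\<Delta> - {0} \<subseteq> {\<gamma>. Lroot Lc \<gamma> \<subseteq> K}"
    using lie_ideal_contains_all_Lroot[OF K \<alpha>] by blast
  then show ?thesis
    using subalgebra_eq_UNIV[OF lie_ideal_imp_subalgebra[OF K]] by blast
qed


text \<open>Applying \<open>ad h - \<langle>\<beta>\<^sub>1, \<alpha>\<^sup>\<or>\<rangle>\<close>, with \<open>h = [e, f]\<close> for a root \<open>\<alpha>\<close> separating two roots
  \<open>\<beta>\<^sub>0 \<noteq> \<beta>\<^sub>1\<close> of \<open>y\<close>, removes \<open>\<beta>\<^sub>1\<close> from the roots of \<open>y\<close> but keeps \<open>\<beta>\<^sub>0\<close>.\<close>
lemma lie_ideal_contains_single_root_element:
  assumes J: "lie_ideal scale br J" and "y \<in> J" "y \<noteq> 0"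
  shows "\<exists>y'\<in>J. y' \<noteq> 0 \<and> (\<exists>\<gamma>. \<forall>i\<in>hsupp y'. fst i = \<gamma>)"
  using assms(2,3)
proof (induction "card (fst ` hsupp y)" arbitrary: y rule: less_induct)
  case less
  show ?case
  proof (cases "\<exists>\<beta>\<^sub>0\<in>fst ` hsupp y. \<exists>\<beta>\<^sub>1\<in>fst ` hsupp y. \<beta>\<^sub>0 \<noteq> \<beta>\<^sub>1")
    case False
    obtain i where "i \<in> hsupp y"
      using hsupp_nonempty[OF less.prems(2)] by blast
    with False have "\<forall>j\<in>hsupp y. fst j = fst i" by blast
    then show ?thesis using less.prems by blast
  next
    case True
    then obtain i\<^sub>0 i\<^sub>1 where i: "i\<^sub>0 \<in> hsupp y" "i\<^sub>1 \<in> hsupp y" "fst i\<^sub>0 \<noteq> fst i\<^sub>1"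
      by blast
    have root: "fst i \<in> \<Delta>" if "i \<in> hsupp y" for i
    proof -
      have "hcomp y (fst i, snd i) \<in> Lc (fst i, snd i)" "hcomp y (fst i, snd i) \<noteq> 0"
        using hcomp_in_component that by (simp_all add: hsupp_iff)
      then show ?thesis by (rule root_of_nonzero_component)
    qed
    then obtain \<alpha> where \<alpha>: "\<alpha> \<in> \<Delta> - {0}" "cr \<alpha> (fst i\<^sub>0) \<noteq> cr \<alpha> (fst i\<^sub>1)"
      using coroots_separate_roots[OF root[OF i(1)] root[OF i(2)] i(3)] by blast
    obtain l u where "u \<in> Lc (\<alpha>, l)" "u \<noteq> 0"
      using nonzero_component_exists \<alpha>(1) by blast
    then obtain e f where ef: "sl2_pair \<alpha> l e f"
      using sl2_pair_exists \<alpha>(1) by blast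
    define y' where "y' = br (br e f) y - scale (cr \<alpha> (fst i\<^sub>1)) y"
    have "y' \<in> J"
      unfolding y'_def using lie_ideal_subspace[OF J] lie_ideal_br_right[OF J less.prems(1)]
      by (intro V.subspace_diff V.subspace_scale less.prems(1))
    have hcomp_y': "hcomp y' i = scale (cr \<alpha> (fst i) - cr \<alpha> (fst i\<^sub>1)) (hcomp y i)" for i
      unfolding y'_def using hcomp_sl2_pair_action[OF ef, of y "fst i" "snd i"]
      by (simp add: hcomp_diff hcomp_scale V.scale_left_diff_distrib)
    then have "hsupp y' \<subseteq> {i \<in> hsupp y. fst i \<noteq> fst i\<^sub>1}"
      by (auto simp: hsupp_iff)
    then have "fst ` hsupp y' \<subseteq> fst ` hsupp y - {fst i\<^sub>1}"
      by auto
    moreover have "fst i\<^sub>1 \<in> fst ` hsupp y"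
      using i(2) by (rule imageI)
    ultimately have "fst ` hsupp y' \<subset> fst ` hsupp y"
      by blast
    then have "card (fst ` hsupp y') < card (fst ` hsupp y)"
      by (intro psubset_card_mono) (simp_all add: finite_hsupp)
    moreover have "i\<^sub>0 \<in> hsupp y'"
      using hcomp_y'[of i\<^sub>0] \<alpha>(2) i(1) by (simp add: hsupp_iff)
    moreover have "y' \<noteq> 0"
      using \<open>i\<^sub>0 \<in> hsupp y'\<close> by (auto simp: hsupp_iff)
    ultimately show ?thesis
      using less.hyps[OF _ \<open>y' \<in> J\<close>] by blast
  qed
qed

end

lemma (in centreless_lie_torus) lie_prime_if_invariant_order:
  fixes lt :: "'g \<Rightarrow> 'g \<Rightarrow> bool"
  assumes "invariant_order lt"
  shows "lie_prime scale br"
  unfolding lie_prime_def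
proof (intro allI impI notI)
  interpret ordered_graded_lie_alg scale br Lc lt
    by (intro ordered_graded_lie_alg.intro graded_lie_alg_axioms assms)
  fix I J
  assume I: "lie_ideal scale br I" and J: "lie_ideal scale br J" and "I \<noteq> {0}" "J \<noteq> {0}"
    and "lie_bracket_set scale br I J = {0}"
  then have IJ: "br x y = 0" if "x \<in> I" "y \<in> J" for x y
    using br_eq_0_if_bracket_set_eq_0 that by blast
  obtain y \<gamma> where y: "y \<in> J" "y \<noteq> 0" and root: "\<forall>i\<in>hsupp y. fst i = \<gamma>"
    using lie_ideal_contains_single_root_element[OF J] V.subspace_0[OF lie_ideal_subspace[OF J]]
      \<open>J \<noteq> {0}\<close> by blast
  obtain i where i: "i \<in> hsupp y" "degree_bound y (snd i)"
    using top_degree_exists[OF y(2)] by blast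
  define \<mu> where "\<mu> = snd i"
  have \<mu>: "(\<gamma>, \<mu>) \<in> hsupp y" "degree_bound y \<mu>"
    using i root unfolding \<mu>_def by (metis prod.collapse)+
  obtain x where "x \<in> I" "x \<noteq> 0"
    using V.subspace_0[OF lie_ideal_subspace[OF I]] \<open>I \<noteq> {0}\<close> by blast
  then obtain j where j: "j \<in> hsupp x" "degree_bound x (snd j)"
    using top_degree_exists by blast
  have "hcomp x j \<in> top_components I"
    unfolding top_components_def using \<open>x \<in> I\<close> j(2)
    by (intro CollectI exI[of _ x] exI[of _ "fst j"] exI[of _ "snd j"]) simp
  moreover have "hcomp x j \<in> Lc (fst j, snd j)" "hcomp x j \<noteq> 0"
    using hcomp_in_component j(1) by (simp_all add: hsupp_iff)
  ultimately have span_UNIV: "V.span (top_components I) = UNIV"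
    by (intro lie_ideal_eq_UNIV[OF lie_ideal_span_top_components[OF I]] V.span_base)
  have "br w (hcomp y (\<gamma>, \<mu>)) = 0" if w: "w \<in> top_components I" for w
  proof -
    obtain x b l where "x \<in> I" "degree_bound x l" "w = hcomp x (b, l)"
      using w unfolding top_components_def by blast
    then show ?thesis
      using hcomp_br_top_degree[of x l y \<mu> \<gamma> b] \<mu>(2) root IJ[OF _ y(1)] by simp
  qed
  then have "br z (hcomp y (\<gamma>, \<mu>)) = 0" for z
    using br_span_eq_0 span_UNIV by blast
  then have "hcomp y (\<gamma>, \<mu>) = 0"
    by (rule centre_eq_0)
  with \<mu>(1) show False by (simp add: hsupp_iff)
qed

theorem proposition4p1:
  fixes sc :: "'k::field_char_0 \<Rightarrow> 'x::ab_group_add \<Rightarrow> 'x"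
    and \<Delta> :: "'x set"
    and cr :: "'x \<Rightarrow> 'x \<Rightarrow> 'k"
    and scale :: "'k \<Rightarrow> 'L::ab_group_add \<Rightarrow> 'L"
    and br :: "'L \<Rightarrow> 'L \<Rightarrow> 'L"
    and Lc :: "'x \<times> 'g::ab_group_add \<Rightarrow> 'L set"
  assumes "free_fg_abelian TYPE('g)"
    and "lie_torus sc \<Delta> cr scale br Lc"
    and "centreless br"
  shows "lie_prime scale br"
proof -
  interpret centreless_lie_torus sc \<Delta> cr scale br Lc
    using assms(2,3) by unfold_locales
  obtain lt :: "'g \<Rightarrow> 'g \<Rightarrow> bool" where "invariant_order lt"
    using free_fg_abelian_invariant_order[OF assms(1)] by blast
  then show ?thesis by (rule lie_prime_if_invariant_order)
qed

end
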